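(* Let $D$ be a connected link diagram with at least one crossing. There are precisely two sign assignments $s_1$ and $s_2$ for $D$, and $s_1=-s_2$.
   Context: Let $D$ be an oriented link diagram in $S^2$. Its shadow gives a CW decomposition $X$ of $S^2$: $0$-cells are the crossings, $1$-cells are the arcs of $D$ between consecutive crossings (oriented by the link orientation, so each $1$-cell $e$ runs from $e(0)$ to $e(1)$), $2$-cells are the complementary regions. For $i\in\{0,1\}$ let $h(e,i)=1$ if $e$ is the upper strand at the crossing $e(i)$ and $h(e,i)=-1$ if it is the lower strand. Define $\beta(e)=-1$ if $h(e,0)=h(e,1)$ and $\beta(e)=1$ otherwise. A sign assignment is a function $s:X^0\to\{\pm1\}$ (from crossings to $\{\pm 1\}$) such that $s(e(0))s(e(1))=\beta(e)$ for every $1$-cell $e$. *)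

theory Defs
  imports Main
begin

text \<open>
  Combinatorial model of a connected oriented link diagram in the 2-sphere.
  Crossings (0-cells) form the finite set V, arcs (1-cells) the finite set E.
  Each arc e runs from endpt e 0 = e(0) to endpt e 1 = e(1).  A dart (half-edge)
  is a pair (e,i) with e in E and i in {0,1}: the end of e at the crossing e(i).
  rot is the rotation system: it cyclically permutes (counterclockwise) the four
  darts at each crossing.  Opposite darts (d and rot (rot d)) form one strand
  through the crossing, which is either the upper strand (h = 1) or the lower
  strand (h = -1); the two strands differ, and by the orientation each strand
  enters the crossing once and leaves it once.  The embedding in S^2 is
  encoded by the rotation system together with the Euler characteristic
  condition V - E + F = 2, the faces (complementary regions) being the orbits
  of the face permutation rot o flip.
\<close>

definition darts :: "'e set \<Rightarrow> ('e \<times> nat) set" where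
  "darts E = E \<times> {0, 1}"

definition dart_vertex :: "('e \<Rightarrow> nat \<Rightarrow> 'v) \<Rightarrow> ('e \<times> nat) \<Rightarrow> 'v" where
  "dart_vertex endpt d = endpt (fst d) (snd d)"

definition darts_at :: "'e set \<Rightarrow> ('e \<Rightarrow> nat \<Rightarrow> 'v) \<Rightarrow> 'v \<Rightarrow> ('e \<times> nat) set" where
  "darts_at E endpt v = {d \<in> darts E. dart_vertex endpt d = v}"

definition flip :: "('e \<times> nat) \<Rightarrow> ('e \<times> nat)" where
  "flip d = (fst d, 1 - snd d)"

definition faces :: "'e set \<Rightarrow> (('e \<times> nat) \<Rightarrow> ('e \<times> nat)) \<Rightarrow> ('e \<times> nat) set set" where
  "faces E rot = (\<lambda>d. {((rot \<circ> flip) ^^ k) d | k. True}) ` darts E"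

definition shadow_connected :: "'v set \<Rightarrow> 'e set \<Rightarrow> ('e \<Rightarrow> nat \<Rightarrow> 'v) \<Rightarrow> bool" where
  "shadow_connected V E endpt \<longleftrightarrow>
     (\<forall>u\<in>V. \<forall>w\<in>V. (u, w) \<in> ({(endpt e 0, endpt e 1) | e. e \<in> E}
                                  \<union> {(endpt e 1, endpt e 0) | e. e \<in> E})\<^sup>*)"

definition link_diagram ::
  "'v set \<Rightarrow> 'e set \<Rightarrow> ('e \<Rightarrow> nat \<Rightarrow> 'v) \<Rightarrow> ('e \<Rightarrow> nat \<Rightarrow> int)
     \<Rightarrow> (('e \<times> nat) \<Rightarrow> ('e \<times> nat)) \<Rightarrow> bool" where
  "link_diagram V E endpt h rot \<longleftrightarrow>
     finite V \<and> finite E \<and>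
     (\<forall>e\<in>E. \<forall>i\<in>{0,1}. endpt e i \<in> V \<and> (h e i = 1 \<or> h e i = -1)) \<and>
     bij_betw rot (darts E) (darts E) \<and>
     (\<forall>v\<in>V. card (darts_at E endpt v) = 4 \<and>
        (\<forall>d\<in>darts_at E endpt v. darts_at E endpt v = {(rot ^^ k) d | k. k < 4})) \<and>
     (\<forall>d\<in>darts E. h (fst (rot (rot d))) (snd (rot (rot d))) = h (fst d) (snd d)
                 \<and> h (fst (rot d)) (snd (rot d)) = - h (fst d) (snd d)
                 \<and> snd (rot (rot d)) \<noteq> snd d)"

definition planar_connected_link_diagram ::
  "'v set \<Rightarrow> 'e set \<Rightarrow> ('e \<Rightarrow> nat \<Rightarrow> 'v) \<Rightarrow> ('e \<Rightarrow> nat \<Rightarrow> int)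
     \<Rightarrow> (('e \<times> nat) \<Rightarrow> ('e \<times> nat)) \<Rightarrow> bool" where
  "planar_connected_link_diagram V E endpt h rot \<longleftrightarrow>
     link_diagram V E endpt h rot \<and> shadow_connected V E endpt \<and>
     int (card V) - int (card E) + int (card (faces E rot)) = 2"

definition beta :: "('e \<Rightarrow> nat \<Rightarrow> int) \<Rightarrow> 'e \<Rightarrow> int" where
  "beta h e = (if h e 0 = h e 1 then -1 else 1)"

definition sign_assignment ::
  "'v set \<Rightarrow> 'e set \<Rightarrow> ('e \<Rightarrow> nat \<Rightarrow> 'v) \<Rightarrow> ('e \<Rightarrow> nat \<Rightarrow> int) \<Rightarrow> ('v \<Rightarrow> int) \<Rightarrow> bool" where
  "sign_assignment V E endpt h s \<longleftrightarrow>
     (\<forall>v\<in>V. s v = 1 \<or> s v = -1) \<and>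
     (\<forall>e\<in>E. s (endpt e 0) * s (endpt e 1) = beta h e)"

end

theory Submission
  imports Defs "HOL-Combinatorics.Orbits"
begin

(* Sign assignments are the mod 2 0-cochains s whose coboundary is the 1-cochain
   b = {e. beta e = -1}. Two of them differ by a 0-cocycle, which is constant on the connected
   shadow, so the only candidates are s and -s. For existence, b is a 1-cocycle: one step of the
   face permutation changes the over/under value h of the current dart exactly when the arc
   traversed lies in b (the rotation at a crossing switches strands), so every face meets b
   evenly. Every 1-cocycle is a coboundary by counting: the kernel of delta0 is {{}, V}, the
   image of delta1 contains all even sets of faces because the dual graph is connected, and
   V - E + F = 2 then forces |ker delta1| <= |im delta0|. *)

lemma odd_card_sym_diff:
  assumes "finite A" "finite B"
  shows "odd (card (sym_diff A B)) \<longleftrightarrow> odd (card A) \<noteq> odd (card B)"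
proof -
  have "card (sym_diff A B) = card (A - B) + card (B - A)"
    using assms by (intro card_Un_disjoint) auto
  moreover have "card A = card (A \<inter> B) + card (A - B)" "card B = card (A \<inter> B) + card (B - A)"
    using assms card_Int_Diff[of A B] card_Int_Diff[of B A] by (simp_all add: Int_commute)
  ultimately show ?thesis by presburger
qed

lemma card_Pow_eq_card_kernel_times_card_image:
  fixes \<phi> :: "'a set \<Rightarrow> 'b set"
  assumes "finite X"
    and hom: "\<And>S T. S \<subseteq> X \<Longrightarrow> T \<subseteq> X \<Longrightarrow> \<phi> (sym_diff S T) = sym_diff (\<phi> S) (\<phi> T)"
  shows "card (Pow X) = card {S \<in> Pow X. \<phi> S = {}} * card (\<phi> ` Pow X)"
proof -
  let ?K = "{S \<in> Pow X. \<phi> S = {}}"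
  have fibre: "card {S \<in> Pow X. \<phi> S = \<phi> S0} = card ?K" if "S0 \<subseteq> X" for S0
  proof -
    have "bij_betw (\<lambda>S. sym_diff S S0) ?K {S \<in> Pow X. \<phi> S = \<phi> S0}"
    proof (rule bij_betw_byWitness[where f' = "\<lambda>S. sym_diff S S0"])
      show "(\<lambda>S. sym_diff S S0) ` ?K \<subseteq> {S \<in> Pow X. \<phi> S = \<phi> S0}"
        using that by (auto simp: hom)
      show "(\<lambda>S. sym_diff S S0) ` {S \<in> Pow X. \<phi> S = \<phi> S0} \<subseteq> ?K"
        using that by (auto simp: hom)
    qed blast+
    then show ?thesis by (simp add: bij_betw_same_card)
  qed
  have "card (Pow X) = card (\<Union>b \<in> \<phi> ` Pow X. {S \<in> Pow X. \<phi> S = b})"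
    by (rule arg_cong[where f = card]) auto
  also have "\<dots> = (\<Sum>b \<in> \<phi> ` Pow X. card {S \<in> Pow X. \<phi> S = b})"
    using \<open>finite X\<close> by (intro card_UN_disjoint) auto
  also have "\<dots> = (\<Sum>b \<in> \<phi> ` Pow X. card ?K)"
    using fibre by (intro sum.cong) auto
  finally show ?thesis by simp
qed

lemma card_even_subsets:
  assumes "finite X" "X \<noteq> {}"
  shows "2 * card {G \<in> Pow X. even (card G)} = 2 ^ card X"
proof -
  have "card {G \<in> Pow X. even (card G)} = card {G \<in> Pow X. odd (card G)}"
    using card_subsupersets_even_odd[of X "{}"] assms by (simp add: Pow_def psubset_eq)
  moreover have "{G \<in> Pow X. even (card G)} \<union> {G \<in> Pow X. odd (card G)} = Pow X" by auto
  then have "card {G \<in> Pow X. even (card G)} + card {G \<in> Pow X. odd (card G)} = 2 ^ card X"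
    using card_Un_disjoint[of "{G \<in> Pow X. even (card G)}" "{G \<in> Pow X. odd (card G)}"] assms(1)
    by (simp add: card_Pow disjoint_iff)
  ultimately show ?thesis by simp
qed

lemma even_subsets_mem_sym_diff_closed:
  assumes "finite X" "{} \<in> \<B>"
    and closed: "\<And>A B. A \<in> \<B> \<Longrightarrow> B \<in> \<B> \<Longrightarrow> sym_diff A B \<in> \<B>"
    and pairs: "\<And>a b. a \<in> X \<Longrightarrow> b \<in> X \<Longrightarrow> sym_diff {a} {b} \<in> \<B>"
    and "G \<subseteq> X" "even (card G)"
  shows "G \<in> \<B>"
  using \<open>G \<subseteq> X\<close> \<open>even (card G)\<close>
proof (induction "card G" arbitrary: G rule: less_induct)
  case less
  show ?case
  proof (cases "G = {}")
    case False
    have "finite G" using less.prems \<open>finite X\<close> finite_subset by blast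
    obtain a where "a \<in> G" using False by blast
    moreover have "G \<noteq> {a}" using less.prems(2) by auto
    ultimately obtain b where ab: "a \<in> G" "b \<in> G" "a \<noteq> b" by blast
    let ?G' = "G - {a, b}"
    have "{a, b} \<subseteq> G" using ab by auto
    then have "card ?G' = card G - 2" "card G \<ge> 2"
      using ab \<open>finite G\<close> card_mono[of G "{a, b}"] by (auto simp: card_Diff_subset)
    then have "?G' \<in> \<B>"
      using less by (intro less.hyps) auto
    moreover have "sym_diff {a} {b} \<in> \<B>" using ab less.prems(1) by (intro pairs) auto
    ultimately have "sym_diff ?G' (sym_diff {a} {b}) \<in> \<B>" by (rule closed)
    moreover have "sym_diff ?G' (sym_diff {a} {b}) = G" using ab by auto
    ultimately show ?thesis by simp
  qed (use \<open>{} \<in> \<B>\<close> in simp)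
qed

lemma self_in_orbit_bij_betw:
  assumes "finite A" "bij_betw f A A" "x \<in> A"
  shows "x \<in> orbit f x"
proof -
  define g where "g y = (if y \<in> A then f y else y)" for y
  have "bij_betw g A A" using assms(2) by (rule bij_betw_cong[THEN iffD1, rotated]) (simp add: g_def)
  then have "g permutes A" by (rule bij_imp_permutes) (simp add: g_def)
  then have "x \<in> orbit g x" using \<open>finite A\<close> by (intro permutation_self_in_orbit permutes_imp_permutation)
  moreover have "orbit g x = orbit f x"
    using assms by (intro orbit_cong0) (auto simp: g_def bij_betw_def)
  ultimately show ?thesis by simp
qed

lemma even_card_changes_along_bij:
  fixes P :: "'a \<Rightarrow> bool"
  assumes "finite A" "bij_betw g A A"
  shows "even (card {x \<in> A. P x \<noteq> P (g x)})"
proof -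
  have "bij_betw g {x \<in> A. P (g x)} {x \<in> A. P x}"
    using assms(2) by (auto simp: bij_betw_def inj_on_def image_iff)
  then have "card {x \<in> A. P (g x)} = card {x \<in> A. P x}" by (rule bij_betw_same_card)
  moreover have "{x \<in> A. P x \<noteq> P (g x)} = sym_diff {x \<in> A. P x} {x \<in> A. P (g x)}" by auto
  ultimately show ?thesis using assms(1) odd_card_sym_diff[of "{x \<in> A. P x}" "{x \<in> A. P (g x)}"] by simp
qed

locale diagram =
  fixes V :: "'v set" and E :: "'e set" and endpt :: "'e \<Rightarrow> nat \<Rightarrow> 'v"
    and h :: "'e \<Rightarrow> nat \<Rightarrow> int" and rot :: "'e \<times> nat \<Rightarrow> 'e \<times> nat"
  assumes diagram: "link_diagram V E endpt h rot"
begin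

abbreviation D where "D \<equiv> darts E"
abbreviation F where "F \<equiv> faces E rot"
abbreviation face_perm where "face_perm \<equiv> rot \<circ> flip"

lemma finite_V: "finite V" and finite_E: "finite E" and bij_rot: "bij_betw rot D D"
  using diagram unfolding link_diagram_def by auto

lemma endpt_in_V: "e \<in> E \<Longrightarrow> i \<in> {0, 1} \<Longrightarrow> endpt e i \<in> V"
  and h_cases: "e \<in> E \<Longrightarrow> i \<in> {0, 1} \<Longrightarrow> h e i = 1 \<or> h e i = -1"
  using diagram unfolding link_diagram_def by blast+

lemma h_rot: "d \<in> D \<Longrightarrow> h (fst (rot d)) (snd (rot d)) = - h (fst d) (snd d)"
  using diagram unfolding link_diagram_def by blast

lemma darts_at_eq_rot_orbit:
  "v \<in> V \<Longrightarrow> d \<in> darts_at E endpt v \<Longrightarrow> darts_at E endpt v = {(rot ^^ k) d | k. k < 4}"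
  using diagram unfolding link_diagram_def by blast

lemma darts_at_nonempty: "v \<in> V \<Longrightarrow> darts_at E endpt v \<noteq> {}"
  using diagram unfolding link_diagram_def by fastforce

lemma mem_darts: "d \<in> D \<longleftrightarrow> fst d \<in> E \<and> snd d \<in> {0, 1}"
  by (cases d) (auto simp: darts_def)

lemma finite_D: "finite D"
  using finite_E by (simp add: darts_def)

lemma dart_vertex_in_V: "d \<in> D \<Longrightarrow> dart_vertex endpt d \<in> V"
  by (simp add: mem_darts dart_vertex_def endpt_in_V)

lemma flip_flip: "d \<in> D \<Longrightarrow> flip (flip d) = d"
  by (cases d) (auto simp: mem_darts flip_def)

lemma bij_flip: "bij_betw flip D D"
  by (rule bij_betw_byWitness[where f' = flip]) (auto simp: flip_flip mem_darts flip_def)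

lemma bij_face_perm: "bij_betw face_perm D D"
  using bij_flip bij_rot by (rule bij_betw_trans)

lemma dart_vertex_rot: "d \<in> D \<Longrightarrow> dart_vertex endpt (rot d) = dart_vertex endpt d"
  using darts_at_eq_rot_orbit[of "dart_vertex endpt d" d] dart_vertex_in_V[of d]
  by (force simp: darts_at_def intro: exI[where x = 1])

lemma dart_vertex_face_perm: "d \<in> D \<Longrightarrow> dart_vertex endpt (face_perm d) = endpt (fst d) (1 - snd d)"
  using dart_vertex_rot[of "flip d"] bij_betwE[OF bij_flip] by (simp add: dart_vertex_def flip_def)

lemma self_in_orbit_face_perm: "d \<in> D \<Longrightarrow> d \<in> orbit face_perm d"
  using finite_D bij_face_perm by (rule self_in_orbit_bij_betw)

lemma faces_eq_orbits: "F = orbit face_perm ` D"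
  unfolding faces_def using self_in_orbit_face_perm by (auto simp: orbit_altdef_self_in)

lemma orbit_subset_darts:
  assumes "d \<in> D"
  shows "orbit face_perm d \<subseteq> D"
proof
  fix x assume "x \<in> orbit face_perm d"
  then show "x \<in> D"
    using bij_betwE[OF bij_face_perm] assms by induction auto
qed

lemma cyclic_on_face: "f \<in> F \<Longrightarrow> cyclic_on face_perm f"
  unfolding faces_eq_orbits using self_in_orbit_face_perm by (auto intro: cyclic_on_singleI)

lemma face_subset_darts: "f \<in> F \<Longrightarrow> f \<subseteq> D"
  unfolding faces_eq_orbits using orbit_subset_darts by blast

lemma finite_faces: "finite F"
  unfolding faces_eq_orbits using finite_D by simp

lemma faces_nonempty: "V \<noteq> {} \<Longrightarrow> F \<noteq> {}"
proof -
  assume "V \<noteq> {}"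
  then obtain v where "v \<in> V" by blast
  then obtain d where "d \<in> D" using darts_at_nonempty by (fastforce simp: darts_at_def)
  then show "F \<noteq> {}" unfolding faces_eq_orbits by blast
qed

lemma face_eq_orbit: "f \<in> F \<Longrightarrow> d \<in> f \<Longrightarrow> f = orbit face_perm d"
  using cyclic_on_face orbit_cyclic_eq3 by metis

lemma even_card_changes_around_face:
  fixes P :: "'e \<times> nat \<Rightarrow> bool"
  assumes "f \<in> F"
  shows "even (card {d \<in> f. P d \<noteq> P (face_perm d)})"
proof -
  have "f \<subseteq> D" using assms by (rule face_subset_darts)
  then have "finite f" "inj_on face_perm f"
    using finite_subset[OF _ finite_D] inj_on_subset[OF bij_betw_imp_inj_on[OF bij_face_perm]]
    by simp_all
  moreover have "face_perm ` f \<subseteq> f"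
    using cyclic_on_inI[OF cyclic_on_face[OF assms]] by blast
  ultimately have "bij_betw face_perm f f" by (simp only: bij_betw_def endo_inj_surj)
  with \<open>finite f\<close> show ?thesis by (rule even_card_changes_along_bij)
qed

(* Mod 2 cellular cochains of the shadow are represented by sets of cells; delta0 and delta1
   are the coboundary maps C^0 \<rightarrow> C^1 \<rightarrow> C^2, a face being adjacent to an arc once per dart. *)
definition delta0 :: "'v set \<Rightarrow> 'e set" where
  "delta0 S = {e \<in> E. (endpt e 0 \<in> S) \<noteq> (endpt e 1 \<in> S)}"

definition delta1 :: "'e set \<Rightarrow> ('e \<times> nat) set set" where
  "delta1 T = {f \<in> F. odd (card {d \<in> f. fst d \<in> T})}"

lemma delta1_empty: "delta1 {} = {}"
  by (simp add: delta1_def)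

lemma empty_in_delta1_image: "{} \<in> delta1 ` Pow E"
  by (rule image_eqI[where x = "{}"]) (simp_all add: delta1_empty)

lemma delta0_sym_diff: "delta0 (sym_diff S T) = sym_diff (delta0 S) (delta0 T)"
  by (auto simp: delta0_def)

lemma delta1_sym_diff: "delta1 (sym_diff S T) = sym_diff (delta1 S) (delta1 T)"
proof -
  have "odd (card {d \<in> f. fst d \<in> sym_diff S T})
      \<longleftrightarrow> odd (card {d \<in> f. fst d \<in> S}) \<noteq> odd (card {d \<in> f. fst d \<in> T})" if "f \<in> F" for f
  proof -
    have "{d \<in> f. fst d \<in> sym_diff S T} = sym_diff {d \<in> f. fst d \<in> S} {d \<in> f. fst d \<in> T}"
      by auto
    moreover have "finite f" using that face_subset_darts finite_D finite_subset by metis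
    ultimately show ?thesis by (simp add: odd_card_sym_diff)
  qed
  then show ?thesis by (auto simp: delta1_def)
qed

lemma delta1_image_sym_diff:
  assumes "A \<in> delta1 ` Pow E" "B \<in> delta1 ` Pow E"
  shows "sym_diff A B \<in> delta1 ` Pow E"
proof -
  obtain S T where "S \<subseteq> E" "T \<subseteq> E" "A = delta1 S" "B = delta1 T" using assms by blast
  then have "sym_diff S T \<in> Pow E" "sym_diff A B = delta1 (sym_diff S T)"
    by (auto simp only: delta1_sym_diff Pow_iff)
  then show ?thesis by (rule rev_image_eqI)
qed

lemma delta1_delta0: "delta1 (delta0 S) = {}"
proof -
  have "{d \<in> f. fst d \<in> delta0 S}
      = {d \<in> f. (dart_vertex endpt d \<in> S) \<noteq> (dart_vertex endpt (face_perm d) \<in> S)}"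
    if "f \<in> F" for f
  proof (intro Collect_cong conj_cong refl)
    fix d assume "d \<in> f"
    then have "d \<in> D" using face_subset_darts[OF that] by blast
    then show "fst d \<in> delta0 S
        \<longleftrightarrow> (dart_vertex endpt d \<in> S) \<noteq> (dart_vertex endpt (face_perm d) \<in> S)"
      using dart_vertex_face_perm[of d] by (auto simp: delta0_def mem_darts dart_vertex_def)
  qed
  then show ?thesis
    using even_card_changes_around_face[where P = "\<lambda>d. dart_vertex endpt d \<in> S"]
    by (simp add: delta1_def)
qed

lemma delta1_beta: "delta1 {e \<in> E. beta h e = -1} = {}"
proof -
  have "{d \<in> f. fst d \<in> {e \<in> E. beta h e = -1}}
      = {d \<in> f. (h (fst d) (snd d) = 1) \<noteq> (h (fst (face_perm d)) (snd (face_perm d)) = 1)}"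
    if "f \<in> F" for f
  proof (intro Collect_cong conj_cong refl)
    fix d assume "d \<in> f"
    then have "d \<in> D" using face_subset_darts[OF that] by blast
    then obtain e i where d: "d = (e, i)" "e \<in> E" "i = 0 \<or> i = 1"
      by (cases d) (auto simp: mem_darts)
    have "flip d \<in> D" using bij_betwE[OF bij_flip] \<open>d \<in> D\<close> by blast
    then have "h (fst (face_perm d)) (snd (face_perm d)) = - h e (1 - i)"
      by (simp add: h_rot d flip_def)
    moreover have "h e 0 = 1 \<or> h e 0 = -1" "h e 1 = 1 \<or> h e 1 = -1"
      using h_cases \<open>e \<in> E\<close> by auto
    ultimately show "fst d \<in> {e \<in> E. beta h e = -1}
        \<longleftrightarrow> (h (fst d) (snd d) = 1) \<noteq> (h (fst (face_perm d)) (snd (face_perm d)) = 1)"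
      using d by (auto simp: beta_def)
  qed
  then show ?thesis
    using even_card_changes_around_face[where P = "\<lambda>d. h (fst d) (snd d) = 1"]
    by (simp add: delta1_def)
qed

lemma delta1_arc:
  assumes "e \<in> E"
  shows "delta1 {e} = sym_diff {orbit face_perm (e, 0)} {orbit face_perm (e, 1)}"
proof (rule set_eqI)
  fix f
  have darts: "(e, 0) \<in> D" "(e, 1) \<in> D" using assms by (simp_all add: mem_darts)
  then have faces: "orbit face_perm (e, 0) \<in> F" "orbit face_perm (e, 1) \<in> F"
    unfolding faces_eq_orbits by blast+
  show "f \<in> delta1 {e} \<longleftrightarrow> f \<in> sym_diff {orbit face_perm (e, 0)} {orbit face_perm (e, 1)}"
  proof (cases "f \<in> F")
    case True
    have "{d \<in> f. fst d \<in> {e}} = f \<inter> {(e, 0), (e, 1)}"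
      using face_subset_darts[OF True] by (auto simp: mem_darts)
    moreover have "odd (card (f \<inter> {(e, 0), (e, 1)})) \<longleftrightarrow> ((e, 0) \<in> f) \<noteq> ((e, 1) \<in> f)"
      by (cases "(e, 0) \<in> f"; cases "(e, 1) \<in> f") (simp_all add: Int_insert_right)
    moreover have "(e, i) \<in> f \<longleftrightarrow> f = orbit face_perm (e, i)" if "(e, i) \<in> D" for i
      using face_eq_orbit[OF True] self_in_orbit_face_perm[OF that] by blast
    ultimately show ?thesis
      using True darts by (simp add: delta1_def) blast
  qed (use faces in \<open>auto simp: delta1_def\<close>)
qed

(* The faces containing x and y, regarded as vertices of the dual graph, are homologous mod 2. *)
definition dual_homologous :: "'e \<times> nat \<Rightarrow> 'e \<times> nat \<Rightarrow> bool" where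
  "dual_homologous x y \<longleftrightarrow> sym_diff {orbit face_perm x} {orbit face_perm y} \<in> delta1 ` Pow E"

lemma dual_homologous_refl: "dual_homologous x x"
  using empty_in_delta1_image by (simp add: dual_homologous_def)

lemma dual_homologous_sym: "dual_homologous x y \<Longrightarrow> dual_homologous y x"
  by (simp add: dual_homologous_def Un_commute)

lemma dual_homologous_trans:
  assumes "dual_homologous x y" "dual_homologous y z"
  shows "dual_homologous x z"
proof -
  have "sym_diff {orbit face_perm x} {orbit face_perm z}
      = sym_diff (sym_diff {orbit face_perm x} {orbit face_perm y})
                 (sym_diff {orbit face_perm y} {orbit face_perm z})"
    by auto
  with assms show ?thesis by (simp add: dual_homologous_def delta1_image_sym_diff)
qed

lemma dual_homologous_flip:
  assumes "d \<in> D"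
  shows "dual_homologous d (flip d)"
proof -
  obtain e i where d: "d = (e, i)" "e \<in> E" "i = 0 \<or> i = 1"
    using assms by (cases d) (auto simp: mem_darts)
  then have "dual_homologous (e, 0) (e, 1)"
    unfolding dual_homologous_def by (metis Pow_iff delta1_arc empty_subsetI imageI insert_subset)
  then show ?thesis
    using d dual_homologous_sym by (auto simp: flip_def)
qed

lemma dual_homologous_rot:
  assumes "d \<in> D"
  shows "dual_homologous (rot d) d"
proof -
  have "flip d \<in> D" using bij_betwE[OF bij_flip] assms by blast
  moreover have "rot d = face_perm (flip d)"
    using assms by (simp add: flip_flip)
  ultimately have "orbit face_perm (rot d) = orbit face_perm (flip d)"
    by (metis face_eq_orbit faces_eq_orbits image_eqI orbit.base)
  then show ?thesis
    using dual_homologous_sym[OF dual_homologous_flip[OF assms]]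
    by (simp add: dual_homologous_def)
qed

lemma dual_homologous_at_vertex:
  assumes "v \<in> V" "d \<in> darts_at E endpt v" "d' \<in> darts_at E endpt v"
  shows "dual_homologous d' d"
proof -
  obtain k where d': "d' = (rot ^^ k) d"
    using darts_at_eq_rot_orbit[OF assms(1,2)] assms(3) by blast
  have "d \<in> D" using assms(2) by (simp add: darts_at_def)
  have "dual_homologous ((rot ^^ k) d) d" for k
  proof (induction k)
    case (Suc k)
    have "(rot ^^ k) d \<in> D" using bij_betwE[OF bij_betw_funpow[OF bij_rot]] \<open>d \<in> D\<close> by blast
    then show ?case
      using dual_homologous_trans[OF dual_homologous_rot Suc.IH] by simp
  qed (simp add: dual_homologous_refl)
  then show ?thesis by (simp add: d')
qed

end

lemma sign_assignment_uminus:
  "sign_assignment V E endpt h s \<Longrightarrow> sign_assignment V E endpt h (\<lambda>v. - s v)"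
  by (auto simp: sign_assignment_def)

locale connected_diagram = diagram +
  assumes connected: "shadow_connected V E endpt"
begin

lemma constant_along_arcs:
  assumes "\<And>e. e \<in> E \<Longrightarrow> g (endpt e 0) = g (endpt e 1)" "u \<in> V" "w \<in> V"
  shows "g u = g w"
proof -
  have "(u, w) \<in> ({(endpt e 0, endpt e 1) | e. e \<in> E} \<union> {(endpt e 1, endpt e 0) | e. e \<in> E})\<^sup>*"
    using connected assms(2,3) by (simp add: shadow_connected_def)
  then show ?thesis
  proof (induction rule: rtrancl_induct)
    case (step y z)
    then show ?case using assms(1) by auto
  qed simp
qed

lemma delta0_eq_empty_iff:
  assumes "S \<subseteq> V"
  shows "delta0 S = {} \<longleftrightarrow> S = {} \<or> S = V"
proof
  assume empty: "delta0 S = {}"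
  have same_side: "(u \<in> S) = (w \<in> S)" if "u \<in> V" "w \<in> V" for u w
  proof (rule constant_along_arcs[where g = "\<lambda>v. v \<in> S", OF _ that])
    show "(endpt e 0 \<in> S) = (endpt e 1 \<in> S)" if "e \<in> E" for e
      using empty that by (auto simp: delta0_def)
  qed
  show "S = {} \<or> S = V"
  proof (rule disjCI)
    assume "S \<noteq> V"
    then obtain w where "w \<in> V" "w \<notin> S" using assms by blast
    then show "S = {}" using same_side assms by blast
  qed
qed (auto simp: delta0_def endpt_in_V)

lemma dual_homologous_all:
  assumes "x \<in> D" "y \<in> D"
  shows "dual_homologous y x"
proof -
  let ?P = "\<lambda>v. \<forall>d \<in> darts_at E endpt v. dual_homologous d x"
  have P_iff: "?P v \<longleftrightarrow> dual_homologous d x" if "v \<in> V" "d \<in> darts_at E endpt v" for v d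
    using that dual_homologous_at_vertex dual_homologous_trans by blast
  have "?P (endpt e 0) = ?P (endpt e 1)" if "e \<in> E" for e
  proof -
    have "(e, i) \<in> darts_at E endpt (endpt e i)" if "i \<in> {0, 1}" for i
      using \<open>e \<in> E\<close> that by (simp add: darts_at_def darts_def dart_vertex_def)
    moreover have "endpt e i \<in> V" if "i \<in> {0, 1}" for i
      using \<open>e \<in> E\<close> that by (rule endpt_in_V)
    moreover have "dual_homologous (e, 0) (e, 1)"
      using dual_homologous_flip[of "(e, 0)"] \<open>e \<in> E\<close> by (simp add: mem_darts flip_def)
    then have "dual_homologous (e, 0) x \<longleftrightarrow> dual_homologous (e, 1) x"
      using dual_homologous_sym dual_homologous_trans by blast
    ultimately show ?thesis using P_iff[of "endpt e 0" "(e, 0)"] P_iff[of "endpt e 1" "(e, 1)"] by simp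
  qed
  moreover have "x \<in> darts_at E endpt (dart_vertex endpt x)" "y \<in> darts_at E endpt (dart_vertex endpt y)"
    using assms by (simp_all add: darts_at_def)
  ultimately show ?thesis
    using constant_along_arcs[of ?P] P_iff dual_homologous_refl dart_vertex_in_V assms by metis
qed

lemma even_face_sets_in_delta1_image:
  assumes "G \<subseteq> F" "even (card G)"
  shows "G \<in> delta1 ` Pow E"
proof (rule even_subsets_mem_sym_diff_closed[OF finite_faces empty_in_delta1_image
        delta1_image_sym_diff _ assms])
  show "sym_diff {f} {g} \<in> delta1 ` Pow E" if "f \<in> F" "g \<in> F" for f g
    using that dual_homologous_all unfolding faces_eq_orbits dual_homologous_def by blast
qed

lemma card_delta0_image:
  assumes "V \<noteq> {}"
  shows "2 ^ card V = 2 * card (delta0 ` Pow V)"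
proof -
  have "card (Pow V) = card {S \<in> Pow V. delta0 S = {}} * card (delta0 ` Pow V)"
    by (rule card_Pow_eq_card_kernel_times_card_image[OF finite_V]) (rule delta0_sym_diff)
  moreover have "{S \<in> Pow V. delta0 S = {}} = {{}, V}"
    using delta0_eq_empty_iff by auto
  ultimately show ?thesis using assms by (simp add: card_Pow finite_V)
qed

lemma card_delta1_image_ge:
  assumes "V \<noteq> {}"
  shows "2 ^ card F \<le> 2 * card (delta1 ` Pow E)"
proof -
  have "2 ^ card F = 2 * card {G \<in> Pow F. even (card G)}"
    using card_even_subsets[OF finite_faces faces_nonempty[OF assms]] by simp
  also have "\<dots> \<le> 2 * card (delta1 ` Pow E)"
    using even_face_sets_in_delta1_image finite_E by (intro mult_le_mono2 card_mono) auto
  finally show ?thesis .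
qed

lemma cocycle_is_coboundary:
  assumes euler: "int (card V) - int (card E) + int (card F) = 2" and "V \<noteq> {}"
    and "T \<subseteq> E" "delta1 T = {}"
  shows "T \<in> delta0 ` Pow V"
proof -
  let ?Z = "{T \<in> Pow E. delta1 T = {}}" and ?B0 = "delta0 ` Pow V" and ?B1 = "delta1 ` Pow E"
  have "delta0 S \<subseteq> E" for S by (auto simp: delta0_def)
  then have "?B0 \<subseteq> ?Z" by (auto simp: delta1_delta0)
  have "card (Pow E) = card ?Z * card ?B1"
    by (rule card_Pow_eq_card_kernel_times_card_image[OF finite_E]) (rule delta1_sym_diff)
  moreover have "card V + card F = card E + 2" using euler by linarith
  ultimately have "card ?Z * card ?B1 * 2 ^ 2 = 2 ^ card V * 2 ^ card F"
    by (simp add: card_Pow finite_E flip: power_add)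
  also have "\<dots> \<le> card ?B0 * card ?B1 * 2 ^ 2"
    using card_delta0_image[OF \<open>V \<noteq> {}\<close>] card_delta1_image_ge[OF \<open>V \<noteq> {}\<close>] by simp
  finally have "card ?Z * card ?B1 \<le> card ?B0 * card ?B1" by simp
  moreover have "card ?B1 > 0"
    using empty_in_delta1_image finite_E by (auto simp: card_gt_0_iff)
  ultimately have "card ?Z \<le> card ?B0" by simp
  then have "?B0 = ?Z"
    using \<open>?B0 \<subseteq> ?Z\<close> finite_E by (intro card_seteq) auto
  with assms show ?thesis by simp
qed

lemma sign_assignment_exists:
  assumes "int (card V) - int (card E) + int (card F) = 2" "V \<noteq> {}"
  shows "\<exists>s. sign_assignment V E endpt h s"
proof -
  have "{e \<in> E. beta h e = -1} \<in> delta0 ` Pow V"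
    by (rule cocycle_is_coboundary[OF assms]) (auto simp: delta1_beta)
  then obtain S where S: "{e \<in> E. beta h e = -1} = delta0 S" by (rule imageE)
  define s where "s v = (if v \<in> S then -1 else (1 :: int))" for v
  have "s (endpt e 0) * s (endpt e 1) = beta h e" if "e \<in> E" for e
  proof -
    have "(endpt e 0 \<in> S) \<noteq> (endpt e 1 \<in> S) \<longleftrightarrow> beta h e = -1"
      using S that by (auto simp: delta0_def set_eq_iff)
    then show ?thesis by (auto simp: s_def beta_def split: if_splits)
  qed
  then have "sign_assignment V E endpt h s"
    by (simp add: sign_assignment_def s_def)
  then show ?thesis by blast
qed

lemma sign_assignments_eq_or_opposite:
  assumes "sign_assignment V E endpt h s" "sign_assignment V E endpt h s'"
  shows "(\<forall>v \<in> V. s' v = s v) \<or> (\<forall>v \<in> V. s' v = - s v)"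
proof -
  have unit: "s v = 1 \<or> s v = -1" "s' v = 1 \<or> s' v = -1" if "v \<in> V" for v
    using assms that by (auto simp: sign_assignment_def)
  have "s (endpt e 0) * s' (endpt e 0) = s (endpt e 1) * s' (endpt e 1)" if "e \<in> E" for e
  proof -
    have "s (endpt e 0) * s (endpt e 1) = s' (endpt e 0) * s' (endpt e 1)"
      using assms that by (simp add: sign_assignment_def)
    moreover have "endpt e 0 \<in> V" "endpt e 1 \<in> V" using that by (simp_all add: endpt_in_V)
    ultimately show ?thesis using unit[of "endpt e 0"] unit[of "endpt e 1"] by auto
  qed
  then have const: "s v * s' v = s w * s' w" if "v \<in> V" "w \<in> V" for v w
    using that by (rule constant_along_arcs[where g = "\<lambda>v. s v * s' v"])
  show ?thesis
  proof (cases "\<exists>u \<in> V. s' u = s u")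
    case True
    then obtain u where "u \<in> V" "s' u = s u" by blast
    then have "s v * s' v = 1" if "v \<in> V" for v
      using const[OF that, of u] unit[of u] by auto
    then have "\<forall>v \<in> V. s' v = s v" using unit by fastforce
    then show ?thesis ..
  next
    case False
    then have "\<forall>v \<in> V. s' v = - s v" using unit by fastforce
    then show ?thesis ..
  qed
qed

end

theorem proposition2p1:
  fixes V :: "'v set" and E :: "'e set" and endpt :: "'e \<Rightarrow> nat \<Rightarrow> 'v"
    and h :: "'e \<Rightarrow> nat \<Rightarrow> int" and rot :: "('e \<times> nat) \<Rightarrow> ('e \<times> nat)"
  assumes "planar_connected_link_diagram V E endpt h rot"
    and "V \<noteq> {}"
  shows "\<exists>s1 s2. sign_assignment V E endpt h s1 \<and> sign_assignment V E endpt h s2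
           \<and> (\<forall>v\<in>V. s1 v = - s2 v)
           \<and> (\<forall>s. sign_assignment V E endpt h s \<longrightarrow> (\<forall>v\<in>V. s v = s1 v) \<or> (\<forall>v\<in>V. s v = s2 v))"
proof -
  interpret connected_diagram V E endpt h rot
    using assms(1) by unfold_locales (simp_all add: planar_connected_link_diagram_def)
  have euler: "int (card V) - int (card E) + int (card (faces E rot)) = 2"
    using assms(1) by (simp add: planar_connected_link_diagram_def)
  obtain s where s: "sign_assignment V E endpt h s"
    using sign_assignment_exists[OF euler assms(2)] by blast
  show ?thesis
  proof (intro exI conjI allI impI)
    show "sign_assignment V E endpt h s" by (rule s)
    show "sign_assignment V E endpt h (\<lambda>v. - s v)" using s by (rule sign_assignment_uminus)
    show "\<forall>v \<in> V. s v = - (- s v)" by simp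
    show "(\<forall>v \<in> V. s' v = s v) \<or> (\<forall>v \<in> V. s' v = - s v)"
      if "sign_assignment V E endpt h s'" for s'
      using s that by (rule sign_assignments_eq_or_opposite)
  qed
qed

end
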